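(* Let $\alpha>0$, $\theta>1$ be fixed reals, let $k\ge2$ be an integer and let $\rho$ be a positive real with $\rho<(k+3)^{-1}$. Let $N,\xi$ be reals with \[N^{3\rho-k}<\lvert\xi\rvert\le N^{\rho-\theta}.\] Then, provided $N$ is sufficiently large, there exist coprime $a,b\in\mathbb{Z}$ with \[\Big\lvert\xi\alpha-\frac ab\Big\rvert\le b^{-2}\quad\text{and}\quad N^{2\rho}\le b\le N^{k-2\rho}.\] *)

theory Defs
  imports Complex_Main
begin

end

theory Submission
  imports Defs "HOL-Analysis.Kronecker_Approximation_Theorem" "HOL-Real_Asymp.Multiseries_Expansion"
begin

text \<open>Apply Dirichlet's theorem to \<open>\<xi>\<alpha>\<close> with parameter \<open>Q = N\<^sup>k\<^sup>-\<^sup>2\<^sup>\<rho>\<close>: this gives a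
  coprime \<open>a/b\<close> with \<open>b \<le> Q\<close> and \<open>\<bar>b\<xi>\<alpha> - a\<bar> < 2/Q\<close>. A small denominator \<open>b < N\<^sup>2\<^sup>\<rho>\<close> is
  impossible: \<open>a = 0\<close> would force \<open>\<bar>\<xi>\<alpha>\<bar> < 2/Q\<close>, contradicting the lower bound on \<open>\<bar>\<xi>\<bar>\<close>,
  while \<open>a \<noteq> 0\<close> would force \<open>\<bar>\<xi>\<alpha>\<bar> > 1/(2N\<^sup>2\<^sup>\<rho>)\<close>, contradicting the upper bound.\<close>

lemma eventually_le_powr_at_top:
  fixes c r :: real
  assumes "r > 0"
  shows "eventually (\<lambda>N. c \<le> N powr r) at_top"
  using real_powr_at_top[OF assms] by (simp add: filterlim_at_top)

lemma Dirichlet_approx_coprime_real: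
  fixes x Q :: real
  assumes "Q \<ge> 1"
  obtains h b :: int where "coprime h b" "0 < b" "b \<le> Q"
    "\<bar>b * x - h\<bar> < 2 / Q" "\<bar>x - h / b\<bar> \<le> b powr (-2)"
proof -
  define M where "M = nat \<lfloor>Q\<rfloor>"
  have floor_pos: "1 \<le> \<lfloor>Q\<rfloor>"
    using assms by (simp add: le_floor_iff)
  then have "real M = of_int \<lfloor>Q\<rfloor>"
    unfolding M_def by simp
  then have "Q - 1 < real M" "real M \<le> Q" "1 \<le> real M"
    using floor_pos by linarith+
  then have M: "M > 0" "real M \<le> Q" "Q \<le> 2 * real M"
    by linarith+
  obtain h b where hb: "coprime h b" "0 < b" "b \<le> int M" "\<bar>b * x - h\<bar> < 1 / M"
    using Dirichlet_approx_coprime[OF \<open>M > 0\<close>] by blast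
  have "1 / real M \<le> 2 / Q"
    using M by (simp add: field_simps)
  with hb(4) have close: "\<bar>b * x - h\<bar> < 2 / Q"
    by linarith
  have "x - h / b = (b * x - h) / b"
    using hb(2) by (simp add: field_simps)
  then have "\<bar>x - h / b\<bar> = \<bar>b * x - h\<bar> / b"
    using hb(2) by (simp add: abs_divide)
  also have "\<dots> \<le> 1 / (real M * b)"
    using hb(2,4) by (simp add: field_simps)
  also have "\<dots> \<le> 1 / (real_of_int b)\<^sup>2"
    using hb(2,3) by (simp add: power2_eq_square frac_le mult_right_mono)
  also have "\<dots> = b powr (-2)"
    using hb(2) by (simp add: powr_minus_divide)
  finally have "\<bar>x - h / b\<bar> \<le> b powr (-2)" .
  moreover have "real_of_int b \<le> Q"
    using hb(3) M(2) by linarith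
  ultimately show thesis
    using that hb(1,2) close by blast
qed

lemma coprime_approx_denominator_between:
  fixes x B Q :: real
  assumes "Q \<ge> 4" and "2 / Q \<le> \<bar>x\<bar>" and "\<bar>x\<bar> \<le> 1 / (2 * B)"
  obtains h b :: int where "coprime h b" "\<bar>x - h / b\<bar> \<le> b powr (-2)" "B \<le> b" "b \<le> Q"
proof -
  obtain h b :: int where hb: "coprime h b" "0 < b" "b \<le> Q"
      "\<bar>b * x - h\<bar> < 2 / Q" "\<bar>x - h / b\<bar> \<le> b powr (-2)"
    using Dirichlet_approx_coprime_real[of Q x] assms(1) by auto
  have "B \<le> b"
  proof (rule ccontr)
    assume small: "\<not> B \<le> b"
    show False
    proof (cases "h = 0")
      case True
      have "\<bar>x\<bar> \<le> \<bar>b * x\<bar>"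
        using hb(2) by (simp add: abs_mult mult_le_cancel_right1)
      with hb(4) True assms(2) show False
        by simp
    next
      case False
      then have "1 \<le> \<bar>real_of_int h\<bar>"
        by linarith
      moreover have "2 / Q \<le> 1 / 2"
        using assms(1) by simp
      ultimately have "1 / 2 \<le> \<bar>b * x\<bar>"
        using hb(4) by arith
      then have "1 / 2 \<le> b * \<bar>x\<bar>"
        using hb(2) by (simp add: abs_mult)
      have "B > 0"
        using small hb(2) by linarith
      have "b * \<bar>x\<bar> \<le> b * (1 / (2 * B))"
        using assms(3) hb(2) by (intro mult_left_mono) auto
      also have "\<dots> < 1 / 2"
        using small \<open>B > 0\<close> by (simp add: field_simps)
      finally show False
        using \<open>1 / 2 \<le> b * \<bar>x\<bar>\<close> by linarith
    qed
  qed
  then show thesis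
    using that hb by blast
qed

lemma coprime_approx_denominator_between_powr:
  fixes \<alpha> \<theta> \<rho> \<kappa> N \<xi> :: real
  assumes "\<alpha> > 0" and "4 \<le> N powr (\<kappa> - 2 * \<rho>)"
    and "2 / \<alpha> \<le> N powr \<rho>" and "2 * \<alpha> \<le> N powr (\<theta> - 3 * \<rho>)"
    and "N powr (3 * \<rho> - \<kappa>) < \<bar>\<xi>\<bar>" and "\<bar>\<xi>\<bar> \<le> N powr (\<rho> - \<theta>)"
  obtains a b :: int where "coprime a b" "\<bar>\<xi> * \<alpha> - a / b\<bar> \<le> b powr (-2)"
    "N powr (2 * \<rho>) \<le> b" "b \<le> N powr (\<kappa> - 2 * \<rho>)"
proof -
  define Q where "Q = N powr (\<kappa> - 2 * \<rho>)"
  define B where "B = N powr (2 * \<rho>)"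
  have "2 / Q \<le> \<alpha> * N powr \<rho> / Q"
    using assms(1-3) by (intro divide_right_mono) (simp_all add: Q_def field_simps)
  also have "\<dots> = \<alpha> * N powr (\<rho> - (\<kappa> - 2 * \<rho>))"
    unfolding Q_def powr_diff by simp
  also have "\<dots> = \<alpha> * N powr (3 * \<rho> - \<kappa>)"
    by (simp add: algebra_simps)
  also have "\<dots> \<le> \<bar>\<xi> * \<alpha>\<bar>"
    using assms(1,5) by (simp add: abs_mult)
  finally have x_lower: "2 / Q \<le> \<bar>\<xi> * \<alpha>\<bar>" .
  have "\<bar>\<xi> * \<alpha>\<bar> \<le> \<alpha> * N powr (\<rho> - \<theta>)"
    using assms(1,6) by (simp add: abs_mult)
  also have "\<rho> - \<theta> = - ((\<theta> - 3 * \<rho>) + 2 * \<rho>)"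
    by simp
  also have "\<alpha> * N powr \<dots> = \<alpha> / (N powr (\<theta> - 3 * \<rho>) * B)"
    unfolding B_def powr_minus_divide powr_add by simp
  also have "\<dots> = \<alpha> / N powr (\<theta> - 3 * \<rho>) / B"
    by simp
  also have "\<dots> \<le> (1 / 2) / B"
    using assms(1,4) by (intro divide_right_mono) (simp_all add: B_def divide_le_eq)
  also have "\<dots> = 1 / (2 * B)"
    by simp
  finally have x_upper: "\<bar>\<xi> * \<alpha>\<bar> \<le> 1 / (2 * B)" .
  show thesis
    using coprime_approx_denominator_between[OF assms(2)[folded Q_def] x_lower x_upper] that
    unfolding B_def Q_def by blast
qed

theorem lemma5p6:
  fixes \<alpha> \<theta> \<rho> :: real and k :: nat
  assumes "\<alpha> > 0" and "\<theta> > 1" and "k \<ge> 2"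
    and "\<rho> > 0" and "\<rho> < 1 / (real k + 3)"
  shows "\<exists>N0::real. \<forall>N \<xi>::real. N \<ge> N0 \<longrightarrow>
           N powr (3 * \<rho> - real k) < \<bar>\<xi>\<bar> \<longrightarrow> \<bar>\<xi>\<bar> \<le> N powr (\<rho> - \<theta>) \<longrightarrow>
           (\<exists>a b :: int. coprime a b \<and>
              \<bar>\<xi> * \<alpha> - real_of_int a / real_of_int b\<bar> \<le> real_of_int b powr (-2) \<and>
              N powr (2 * \<rho>) \<le> real_of_int b \<and> real_of_int b \<le> N powr (real k - 2 * \<rho>))"
proof -
  have "\<rho> * real k + 3 * \<rho> < 1"
    using assms(4,5) by (simp add: field_simps)
  moreover have "\<rho> * 2 \<le> \<rho> * real k"
    using assms(3,4) by (intro mult_left_mono) auto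
  ultimately have "real k - 2 * \<rho> > 0" "\<theta> - 3 * \<rho> > 0"
    using assms(2,3) by linarith+
  then have "eventually (\<lambda>N. 4 \<le> N powr (real k - 2 * \<rho>) \<and> 2 / \<alpha> \<le> N powr \<rho>
      \<and> 2 * \<alpha> \<le> N powr (\<theta> - 3 * \<rho>)) at_top"
    using assms(4) by (intro eventually_conj eventually_le_powr_at_top)
  then obtain N0 where "\<And>N. N \<ge> N0 \<Longrightarrow> 4 \<le> N powr (real k - 2 * \<rho>)
      \<and> 2 / \<alpha> \<le> N powr \<rho> \<and> 2 * \<alpha> \<le> N powr (\<theta> - 3 * \<rho>)"
    by (auto simp: eventually_at_top_linorder)
  then show ?thesis
    using coprime_approx_denominator_between_powr[OF assms(1)] by metis
qed

end
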